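(* Let $\mathcal{A}\in\mathbb{R}^{d_1\times\cdots\times d_k}$ be an order-$k$ real tensor and let $1\le p\le q\le\infty$. Then \[ \|\mathcal{A}\|_p\le \|\mathcal{A}\|_q\le \dim(\mathcal{A})^{\frac1p-\frac1q}\,\|\mathcal{A}\|_p . \]
   Context: For $\mathcal{A}=(a_{i_1\dots i_k})\in\mathbb{R}^{d_1\times\cdots\times d_k}$, $\dim(\mathcal{A})=\prod_{n=1}^k d_n$. The associated multilinear functional is $\mathcal{A}(\mathbf{x}_1,\dots,\mathbf{x}_k)=\sum_{i_1,\dots,i_k} a_{i_1\dots i_k}x^{(1)}_{i_1}\cdots x^{(k)}_{i_k}$ for $\mathbf{x}_n\in\mathbb{R}^{d_n}$. For $1\le p\le\infty$ the $l^p$-norm of $\mathcal{A}$ is defined as $\|\mathcal{A}\|_p=\sup\{\mathcal{A}(\mathbf{x}_1,\dots,\mathbf{x}_k):\ \mathbf{x}_n\in\mathbb{R}^{d_n},\ \|\mathbf{x}_n\|_p=1,\ n\in[k]\}$, where $\|\mathbf{x}_n\|_p$ is the vector $l^p$-norm. (This is used even for matrices, which are viewed as bilinear functionals; it is not the classical induced matrix $l^p$-norm when $p\neq 2$.) *)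

theory Defs
  imports Complex_Main "HOL-Library.Extended_Real" "HOL-Library.FuncSet"
begin

text \<open>An order-k real tensor with dimensions d 0, ..., d (k-1) is a function on
  multi-indices i (i n < d n for n < k); entries outside this index set are irrelevant.
  A vector of R^m is a function nat => real, only indices j < m matter.\<close>

definition multi_indices :: "nat \<Rightarrow> (nat \<Rightarrow> nat) \<Rightarrow> (nat \<Rightarrow> nat) set" where
  "multi_indices k d = PiE {..<k} (\<lambda>n. {..<d n})"

definition tensor_dim :: "nat \<Rightarrow> (nat \<Rightarrow> nat) \<Rightarrow> nat" where
  "tensor_dim k d = (\<Prod>n<k. d n)"

definition vec_lp_norm :: "ereal \<Rightarrow> nat \<Rightarrow> (nat \<Rightarrow> real) \<Rightarrow> real" where
  "vec_lp_norm p m v =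
     (if p = \<infinity> then Max ((\<lambda>j. \<bar>v j\<bar>) ` {..<m})
      else (\<Sum>j<m. \<bar>v j\<bar> powr real_of_ereal p) powr (1 / real_of_ereal p))"

definition multilin :: "nat \<Rightarrow> (nat \<Rightarrow> nat) \<Rightarrow> ((nat \<Rightarrow> nat) \<Rightarrow> real) \<Rightarrow> (nat \<Rightarrow> nat \<Rightarrow> real) \<Rightarrow> real" where
  "multilin k d A x = (\<Sum>i\<in>multi_indices k d. A i * (\<Prod>n<k. x n (i n)))"

definition tensor_lp_norm :: "ereal \<Rightarrow> nat \<Rightarrow> (nat \<Rightarrow> nat) \<Rightarrow> ((nat \<Rightarrow> nat) \<Rightarrow> real) \<Rightarrow> real" where
  "tensor_lp_norm p k d A =
     Sup {multilin k d A x | x. \<forall>n<k. vec_lp_norm p (d n) (x n) = 1}"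

definition exp_inv :: "ereal \<Rightarrow> real" where
  "exp_inv p = (if p = \<infinity> then 0 else 1 / real_of_ereal p)"

end

theory Submission
  imports Defs "HOL-Analysis.Convex"
begin

text \<open>Everything reduces to two comparisons of vector norms on R^m for p \<le> q:
  the l^q norm is at most the l^p norm, and the l^p norm is at most
  m^(1/p - 1/q) times the l^q norm (Jensen's inequality for the convex function
  t \<mapsto> t^(q/p)). If each vector norm satisfies |v|_p \<le> c_n |v|_q, then
  rescaling a q-unit vector in every slot to a p-unit vector multiplies the multilinear
  functional by a product of factors in (0, c_n], and since the p-norm of the tensor is
  nonnegative this gives |A|_q \<le> (\<Prod> c_n) |A|_p. The two vector comparisons,
  with c_n = 1 and c_n = d_n^(1/p - 1/q), yield the two inequalities.\<close>

lemma sum_powr_le_sum_powr_powr: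
  fixes a :: "'a \<Rightarrow> real"
  assumes "finite S" "\<And>i. i \<in> S \<Longrightarrow> 0 \<le> a i" "0 < r" "r \<le> s"
  shows "(\<Sum>i\<in>S. a i powr s) \<le> (\<Sum>i\<in>S. a i powr r) powr (s / r)"
proof -
  define N where "N = (\<Sum>i\<in>S. a i powr r) powr (1 / r)"
  have N0: "0 \<le> N" by (simp add: N_def)
  have aN: "a i \<le> N" if "i \<in> S" for i
  proof -
    have "a i = (a i powr r) powr (1 / r)"
      using assms(2)[OF that] assms(3) by (simp add: powr_powr)
    also have "\<dots> \<le> N"
      unfolding N_def using assms that by (intro powr_mono2 member_le_sum) auto
    finally show ?thesis .
  qed
  have "(\<Sum>i\<in>S. a i powr s) = (\<Sum>i\<in>S. a i powr r * a i powr (s - r))"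
    by (simp add: powr_add[of _ r "s - r", symmetric])
  also have "\<dots> \<le> (\<Sum>i\<in>S. a i powr r * N powr (s - r))"
    using assms aN by (intro sum_mono mult_left_mono powr_mono2) auto
  also have "\<dots> = N powr r * N powr (s - r)"
    using assms(3) by (simp add: N_def powr_powr sum_distrib_right sum_nonneg)
  also have "\<dots> = N powr s"
    by (simp add: powr_add[of N r "s - r", symmetric])
  also have "\<dots> = (\<Sum>i\<in>S. a i powr r) powr (s / r)"
    by (simp add: N_def powr_powr)
  finally show ?thesis .
qed

lemma sum_le_card_powr_mul_sum_powr_powr:
  fixes a :: "'a \<Rightarrow> real"
  assumes "finite S" "\<And>i. i \<in> S \<Longrightarrow> 0 \<le> a i" "1 \<le> t"
  shows "(\<Sum>i\<in>S. a i) \<le> real (card S) powr (1 - 1 / t) * (\<Sum>i\<in>S. a i powr t) powr (1 / t)"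
proof -
  define S' where "S' = {i\<in>S. a i \<noteq> 0}"
  define n where "n = real (card S')"
  have S'_sum: "(\<Sum>i\<in>S. f i) = (\<Sum>i\<in>S'. f i)" if "\<And>i. f i = 0 \<longleftrightarrow> a i = 0" for f :: "'a \<Rightarrow> real"
    by (rule sum.mono_neutral_right) (use assms(1) that in \<open>auto simp: S'_def\<close>)
  have sum_a: "(\<Sum>i\<in>S. a i) = (\<Sum>i\<in>S'. a i)" and sum_at: "(\<Sum>i\<in>S. a i powr t) = (\<Sum>i\<in>S'. a i powr t)"
    by (rule S'_sum; simp)+
  have n_le: "n \<le> real (card S)"
    unfolding n_def using assms(1) by (intro of_nat_mono card_mono) (auto simp: S'_def)
  show ?thesis
  proof (cases "S' = {}")
    case True
    then show ?thesis using assms(3) by (simp add: sum_a)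
  next
    case False
    have fin: "finite S'" using assms(1) by (simp add: S'_def)
    then have n_pos: "0 < n" using False by (simp add: n_def card_gt_0_iff)
    define T where "T = (\<Sum>i\<in>S'. a i)"
    define U where "U = (\<Sum>i\<in>S'. a i powr t)"
    have T0: "0 \<le> T" unfolding T_def S'_def by (rule sum_nonneg) (use assms(2) in auto)
    have pos: "0 < a i" if "i \<in> S'" for i
      using that assms(2) by (force simp: S'_def)
    have "(\<Sum>i\<in>S'. (1 / n) *\<^sub>R a i) powr t \<le> (\<Sum>i\<in>S'. (1 / n) * a i powr t)"
      by (rule convex_on_sum[OF fin False powr_convex[OF assms(3)]])
        (use n_pos pos in \<open>simp_all add: n_def\<close>)
    then have "(T / n) powr t \<le> U / n"
      by (simp add: T_def U_def sum_divide_distrib)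
    then have "T / n \<le> (U / n) powr (1 / t)"
      using powr_mono2[of "1 / t" "(T / n) powr t" "U / n"] assms(3) T0 n_pos
      by (simp add: powr_powr)
    then have "T \<le> n powr (1 - 1 / t) * U powr (1 / t)"
      using n_pos by (simp add: powr_diff powr_divide field_simps)
    also have "\<dots> \<le> real (card S) powr (1 - 1 / t) * U powr (1 / t)"
      using n_pos n_le assms(3) by (intro mult_right_mono powr_mono2) auto
    finally show ?thesis by (simp add: T_def U_def sum_a sum_at)
  qed
qed


lemma vec_lp_norm_ereal: "vec_lp_norm (ereal r) m v = (\<Sum>j<m. \<bar>v j\<bar> powr r) powr (1 / r)"
  by (simp add: vec_lp_norm_def)

lemma vec_lp_norm_infinity: "vec_lp_norm \<infinity> m v = Max ((\<lambda>j. \<bar>v j\<bar>) ` {..<m})"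
  by (simp add: vec_lp_norm_def)

lemma ereal_ge_1_cases:
  assumes "1 \<le> (p::ereal)"
  obtains "p = \<infinity>" | r where "p = ereal r" "1 \<le> r"
  using assms by (cases p) auto

lemma abs_le_vec_lp_norm:
  assumes "1 \<le> p" "j < m"
  shows "\<bar>v j\<bar> \<le> vec_lp_norm p m v"
  using assms(1)
proof (cases rule: ereal_ge_1_cases)
  case 1
  then show ?thesis using assms(2) by (simp add: vec_lp_norm_infinity)
next
  case (2 r)
  have "\<bar>v j\<bar> = (\<bar>v j\<bar> powr r) powr (1 / r)"
    using 2 by (simp add: powr_powr)
  also have "\<dots> \<le> (\<Sum>j<m. \<bar>v j\<bar> powr r) powr (1 / r)"
    using 2 assms(2) by (intro powr_mono2 member_le_sum) auto
  finally show ?thesis using 2 by (simp add: vec_lp_norm_ereal)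
qed

lemma vec_lp_norm_nonneg:
  assumes "1 \<le> p" "1 \<le> m"
  shows "0 \<le> vec_lp_norm p m v"
  using abs_le_vec_lp_norm[OF assms(1), of 0 m v] assms(2) by linarith

lemma vec_lp_norm_eq_0_iff:
  assumes "1 \<le> p" "1 \<le> m"
  shows "vec_lp_norm p m v = 0 \<longleftrightarrow> (\<forall>j<m. v j = 0)"
proof
  assume "vec_lp_norm p m v = 0"
  then show "\<forall>j<m. v j = 0"
    using abs_le_vec_lp_norm[OF assms(1), of _ m v] by force
next
  assume v0: "\<forall>j<m. v j = 0"
  have "(\<lambda>j. \<bar>v j\<bar>) ` {..<m} = {0}"
    using v0 assms(2) by (auto intro: rev_image_eqI[of 0])
  moreover have "(\<Sum>j<m. \<bar>v j\<bar> powr r) = 0" for r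
    using v0 by simp
  ultimately show "vec_lp_norm p m v = 0"
    by (simp add: vec_lp_norm_def)
qed

lemma vec_lp_norm_mult:
  assumes "1 \<le> p" "1 \<le> m"
  shows "vec_lp_norm p m (\<lambda>j. c * v j) = \<bar>c\<bar> * vec_lp_norm p m v"
  using assms(1)
proof (cases rule: ereal_ge_1_cases)
  case 1
  have "mono (\<lambda>t. \<bar>c\<bar> * t)"
    by (rule monoI) (simp add: mult_left_mono)
  moreover have "{..<m} \<noteq> {}"
    using assms(2) by (simp add: lessThan_empty_iff)
  ultimately have "\<bar>c\<bar> * Max ((\<lambda>j. \<bar>v j\<bar>) ` {..<m}) = Max ((\<lambda>j. \<bar>c * v j\<bar>) ` {..<m})"
    by (simp add: mono_Max_commute image_image abs_mult)
  then show ?thesis using 1 by (simp add: vec_lp_norm_infinity)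
next
  case (2 r)
  have "(\<Sum>j<m. \<bar>c * v j\<bar> powr r) powr (1 / r)
      = (\<bar>c\<bar> powr r) powr (1 / r) * (\<Sum>j<m. \<bar>v j\<bar> powr r) powr (1 / r)"
    by (simp add: abs_mult powr_mult sum_distrib_left sum_nonneg flip: powr_mult)
  also have "(\<bar>c\<bar> powr r) powr (1 / r) = \<bar>c\<bar>"
    using 2 by (simp add: powr_powr)
  finally show ?thesis using 2 by (simp add: vec_lp_norm_ereal)
qed

lemma ex_vec_lp_norm_eq_1:
  assumes "1 \<le> p" "1 \<le> m"
  shows "\<exists>v. vec_lp_norm p m v = 1"
proof -
  define N where "N = vec_lp_norm p m (\<lambda>_. 1)"
  have "1 \<le> N"
    using abs_le_vec_lp_norm[OF assms(1), of 0 m "\<lambda>_. 1"] assms(2) by (simp add: N_def)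
  then have "vec_lp_norm p m (\<lambda>_. (1 / N) * 1) = 1"
    unfolding vec_lp_norm_mult[OF assms] N_def[symmetric] by simp
  then show ?thesis by blast
qed

lemma vec_lp_norm_antimono:
  assumes "1 \<le> p" "p \<le> q" "1 \<le> m"
  shows "vec_lp_norm q m v \<le> vec_lp_norm p m v"
proof (cases "q = \<infinity>")
  case True
  have "{..<m} \<noteq> {}"
    using assms(3) by (simp add: lessThan_empty_iff)
  then show ?thesis
    using True abs_le_vec_lp_norm[OF assms(1)] by (simp add: vec_lp_norm_infinity)
next
  case False
  then obtain r s where r: "p = ereal r" "1 \<le> r" and s: "q = ereal s" "r \<le> s"
    using assms(1,2) by (cases p; cases q) auto
  have "(\<Sum>j<m. \<bar>v j\<bar> powr s) powr (1 / s) \<le> ((\<Sum>j<m. \<bar>v j\<bar> powr r) powr (s / r)) powr (1 / s)"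
    using r s by (intro powr_mono2 sum_powr_le_sum_powr_powr) (auto intro: sum_nonneg)
  also have "\<dots> = (\<Sum>j<m. \<bar>v j\<bar> powr r) powr (1 / r)"
    using r s by (simp add: powr_powr)
  finally show ?thesis
    using r s by (simp add: vec_lp_norm_ereal)
qed

lemma vec_lp_norm_le_dim_powr:
  assumes "1 \<le> p" "p \<le> q" "1 \<le> m"
  shows "vec_lp_norm p m v \<le> real m powr (exp_inv p - exp_inv q) * vec_lp_norm q m v"
  using assms(1)
proof (cases rule: ereal_ge_1_cases)
  case 1
  then show ?thesis
    using assms by (simp add: exp_inv_def)
next
  case (2 r)
  show ?thesis
  proof (cases "q = \<infinity>")
    case True
    define M where "M = Max ((\<lambda>j. \<bar>v j\<bar>) ` {..<m})"
    have "\<bar>v j\<bar> \<le> M" if "j < m" for j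
      using that by (simp add: M_def)
    then have "(\<Sum>j<m. \<bar>v j\<bar> powr r) \<le> (\<Sum>j<m. M powr r)"
      using 2 by (intro sum_mono powr_mono2) auto
    then have "(\<Sum>j<m. \<bar>v j\<bar> powr r) powr (1 / r) \<le> (real m * M powr r) powr (1 / r)"
      using 2 by (intro powr_mono2) (auto intro: sum_nonneg)
    also have "\<dots> = real m powr (1 / r) * M"
      using 2 vec_lp_norm_nonneg[of \<infinity> m v] assms(3)
      by (simp add: powr_mult powr_powr M_def vec_lp_norm_infinity)
    finally show ?thesis
      using 2 True by (simp add: vec_lp_norm_ereal vec_lp_norm_infinity exp_inv_def M_def)
  next
    case False
    then obtain s where s: "q = ereal s" "r \<le> s"
      using assms(2) 2 by (cases q) auto
    have "(\<Sum>j<m. \<bar>v j\<bar> powr r) powr (1 / r)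
        \<le> (real m powr (1 - r / s) * ((\<Sum>j<m. (\<bar>v j\<bar> powr r) powr (s / r)) powr (r / s))) powr (1 / r)"
      using sum_le_card_powr_mul_sum_powr_powr[of "{..<m}" "\<lambda>j. \<bar>v j\<bar> powr r" "s / r"] 2 s
      by (intro powr_mono2) (auto intro: sum_nonneg)
    also have "\<dots> = real m powr (1 / r - 1 / s) * (\<Sum>j<m. \<bar>v j\<bar> powr s) powr (1 / s)"
      using 2 s by (simp add: powr_mult powr_powr field_simps)
    finally show ?thesis
      using 2 s by (simp add: vec_lp_norm_ereal exp_inv_def)
  qed
qed


lemma ex_vec_lp_norm_family_eq_1:
  assumes "1 \<le> p" "\<forall>n<k. 1 \<le> d n"
  shows "\<exists>x. \<forall>n<k. vec_lp_norm p (d n) (x n) = 1"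
proof -
  have "\<forall>n<k. \<exists>v. vec_lp_norm p (d n) v = 1"
    using ex_vec_lp_norm_eq_1[OF assms(1)] assms(2) by blast
  then show ?thesis by (simp add: choice_iff')
qed

lemma multilin_mult:
  "multilin k d A (\<lambda>n j. t n * x n j) = (\<Prod>n<k. t n) * multilin k d A x"
  unfolding multilin_def by (simp add: prod.distrib sum_distrib_left mult_ac)

lemma multilin_le_tensor_lp_norm:
  assumes "1 \<le> p" "\<forall>n<k. vec_lp_norm p (d n) (x n) = 1"
  shows "multilin k d A x \<le> tensor_lp_norm p k d A"
  unfolding tensor_lp_norm_def
proof (rule cSup_upper)
  show "multilin k d A x \<in> {multilin k d A x | x. \<forall>n<k. vec_lp_norm p (d n) (x n) = 1}"
    using assms(2) by blast
  show "bdd_above {multilin k d A x | x. \<forall>n<k. vec_lp_norm p (d n) (x n) = 1}"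
  proof (rule bdd_aboveI, safe)
    fix y assume y: "\<forall>n<k. vec_lp_norm p (d n) (y n) = 1"
    have "A i * (\<Prod>n<k. y n (i n)) \<le> \<bar>A i\<bar>" if i: "i \<in> multi_indices k d" for i
    proof -
      have "\<bar>y n (i n)\<bar> \<le> 1" if "n < k" for n
        using abs_le_vec_lp_norm[OF assms(1), of "i n" "d n" "y n"] i y that
        by (auto simp: multi_indices_def)
      then have "\<bar>\<Prod>n<k. y n (i n)\<bar> \<le> 1"
        unfolding abs_prod by (intro prod_le_1) auto
      then show ?thesis
        by (metis abs_ge_self abs_mult dual_order.trans mult_left_le abs_ge_zero)
    qed
    then show "multilin k d A y \<le> (\<Sum>i\<in>multi_indices k d. \<bar>A i\<bar>)"
      unfolding multilin_def by (rule sum_mono)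
  qed
qed

lemma tensor_lp_norm_least:
  assumes "1 \<le> p" "\<forall>n<k. 1 \<le> d n"
    and "\<And>x. \<forall>n<k. vec_lp_norm p (d n) (x n) = 1 \<Longrightarrow> multilin k d A x \<le> C"
  shows "tensor_lp_norm p k d A \<le> C"
proof -
  obtain x where "\<forall>n<k. vec_lp_norm p (d n) (x n) = 1"
    using ex_vec_lp_norm_family_eq_1[OF assms(1,2)] by blast
  then show ?thesis
    unfolding tensor_lp_norm_def using assms(3) by (intro cSup_least) auto
qed

text \<open>Flipping the sign of the first vector negates the value of the functional, so the
  supremum dominates both a value and its negative.\<close>
lemma tensor_lp_norm_nonneg:
  assumes "1 \<le> p" "\<forall>n<k. 1 \<le> d n" "1 \<le> k"
  shows "0 \<le> tensor_lp_norm p k d A"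
proof -
  obtain x where x: "\<forall>n<k. vec_lp_norm p (d n) (x n) = 1"
    using ex_vec_lp_norm_family_eq_1[OF assms(1,2)] by blast
  define t where "t = (\<lambda>n::nat. if n = 0 then - 1 else 1 :: real)"
  have "(\<Prod>n<k. t n) = t 0 * (\<Prod>n\<in>{..<k} - {0}. t n)"
    using assms(3) by (simp add: prod.remove)
  also have "(\<Prod>n\<in>{..<k} - {0}. t n) = 1"
    by (rule prod.neutral) (simp add: t_def)
  finally have "multilin k d A (\<lambda>n j. t n * x n j) = - multilin k d A x"
    by (simp add: multilin_mult t_def)
  moreover have "multilin k d A (\<lambda>n j. t n * x n j) \<le> tensor_lp_norm p k d A"
    using x assms(1,2) by (intro multilin_le_tensor_lp_norm) (simp_all add: vec_lp_norm_mult t_def)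
  moreover have "multilin k d A x \<le> tensor_lp_norm p k d A"
    by (rule multilin_le_tensor_lp_norm[OF assms(1) x])
  ultimately show ?thesis by linarith
qed

lemma tensor_lp_norm_le_prod_mult:
  assumes d: "\<forall>n<k. 1 \<le> d n" and "1 \<le> p" "1 \<le> q"
    and comp: "\<And>n v. n < k \<Longrightarrow> vec_lp_norm p (d n) v \<le> c n * vec_lp_norm q (d n) v"
  shows "tensor_lp_norm q k d A \<le> (\<Prod>n<k. c n) * tensor_lp_norm p k d A"
proof (cases "k = 0")
  case True
  then show ?thesis by (simp add: tensor_lp_norm_def)
next
  case False
  show ?thesis
  proof (rule tensor_lp_norm_least[OF assms(3) d])
    fix x assume x: "\<forall>n<k. vec_lp_norm q (d n) (x n) = 1"
    define a where "a n = (if n < k then vec_lp_norm p (d n) (x n) else 1)" for n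
    have a_pos: "0 < a n" for n
    proof (cases "n < k")
      case True
      then have "\<exists>j<d n. x n j \<noteq> 0"
        using x d vec_lp_norm_eq_0_iff[OF assms(3), of "d n" "x n"] by auto
      then have "vec_lp_norm p (d n) (x n) \<noteq> 0"
        using vec_lp_norm_eq_0_iff[OF assms(2), of "d n" "x n"] d True by auto
      then show ?thesis
        using vec_lp_norm_nonneg[OF assms(2), of "d n" "x n"] d True by (simp add: a_def)
    qed (simp add: a_def)
    have a_le: "a n \<le> c n" if "n < k" for n
      using comp[OF that, of "x n"] x that by (simp add: a_def)
    define y where "y n j = (1 / a n) * x n j" for n j
    have "vec_lp_norm p (d n) (y n) = 1" if "n < k" for n
    proof -
      have "vec_lp_norm p (d n) (y n) = \<bar>1 / a n\<bar> * vec_lp_norm p (d n) (x n)"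
        unfolding y_def by (rule vec_lp_norm_mult[OF assms(2)]) (use d that in simp)
      then show ?thesis
        using a_pos[of n] that by (simp add: a_def)
    qed
    then have y_le: "multilin k d A y \<le> tensor_lp_norm p k d A"
      by (intro multilin_le_tensor_lp_norm[OF assms(2)]) blast
    have "x = (\<lambda>n j. a n * y n j)"
      using a_pos by (simp add: y_def less_le)
    then have "multilin k d A x = (\<Prod>n<k. a n) * multilin k d A y"
      by (metis multilin_mult)
    also have "\<dots> \<le> (\<Prod>n<k. a n) * tensor_lp_norm p k d A"
      using y_le a_pos by (intro mult_left_mono prod_nonneg) (auto intro: less_imp_le)
    also have "\<dots> \<le> (\<Prod>n<k. c n) * tensor_lp_norm p k d A"
      using a_pos a_le tensor_lp_norm_nonneg[OF assms(2) d] False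
      by (intro mult_right_mono prod_mono) (auto intro: less_imp_le)
    finally show "multilin k d A x \<le> (\<Prod>n<k. c n) * tensor_lp_norm p k d A" .
  qed
qed

theorem proposition2p4:
  fixes k :: nat and d :: "nat \<Rightarrow> nat" and A :: "(nat \<Rightarrow> nat) \<Rightarrow> real"
    and p q :: ereal
  assumes "\<forall>n<k. d n \<ge> 1"
    and "1 \<le> p" and "p \<le> q"
  shows "tensor_lp_norm p k d A \<le> tensor_lp_norm q k d A
       \<and> tensor_lp_norm q k d A
           \<le> real (tensor_dim k d) powr (exp_inv p - exp_inv q) * tensor_lp_norm p k d A"
proof
  have q: "1 \<le> q" using assms(2,3) by order
  show "tensor_lp_norm p k d A \<le> tensor_lp_norm q k d A"
    using tensor_lp_norm_le_prod_mult[OF assms(1) q assms(2), of "\<lambda>_. 1"]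
      vec_lp_norm_antimono[OF assms(2,3)] assms(1) by simp
  let ?e = "exp_inv p - exp_inv q"
  have "tensor_lp_norm q k d A \<le> (\<Prod>n<k. real (d n) powr ?e) * tensor_lp_norm p k d A"
    using vec_lp_norm_le_dim_powr[OF assms(2,3)] assms(1)
    by (intro tensor_lp_norm_le_prod_mult[OF assms(1) assms(2) q]) simp
  then show "tensor_lp_norm q k d A \<le> real (tensor_dim k d) powr ?e * tensor_lp_norm p k d A"
    by (simp add: tensor_dim_def prod_powr_distrib)
qed

end
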